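(* There exist reduced valuation monoids $H_1$ and $H_2$ that are not isomorphic but such that $\mathcal{P}_{\mathrm{fin},1}(H_1)\simeq\mathcal{P}_{\mathrm{fin},1}(H_2)$. For instance, one may take the additively written submonoids of $(\mathbb{Z}^2,+)$ given by $H_1=(\mathbb{Z}\times\mathbb{N})\cup(\mathbb{N}_0\times\{0\})$ and $H_2=\{(x,y)\in\mathbb{Z}^2: y\le \alpha x\}$, where $\alpha>0$ is an irrational real number.
   Context: $\mathbb{N}$ denotes the positive integers and $\mathbb{N}_0$ the non-negative integers. A commutative monoid $H$ is cancellative if $ac=bc$ implies $a=b$. For a commutative cancellative monoid $H$, $\mathsf{q}(H)$ denotes its quotient group, with $H\subseteq\mathsf{q}(H)$. A commutative cancellative monoid $H$ is a valuation monoid if for every $x\in\mathsf{q}(H)$ we have $x\in H$ or $x^{-1}\in H$ (additively: $x\in H$ or $-x\in H$); it is reduced if its only invertible element is the identity. For a monoid $H$ with identity $1$, $\mathcal{P}_{\mathrm{fin},1}(H)$ is the set of all finite subsets of $H$ containing the identity, a monoid under setwise multiplication $(X,Y)\mapsto\{xy: x\in X, y\in Y\}$ (setwise addition in the additive case) with identity $\{1\}$. *)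

theory Defs
  imports Complex_Main "HOL-Library.Product_Plus"
begin

text \<open>Commutative monoids are represented additively as submonoids H of an abelian
group (here of int \<times> int); such monoids are automatically cancellative.\<close>

definition submonoid :: "'a::ab_group_add set \<Rightarrow> bool" where
  "submonoid H \<longleftrightarrow> 0 \<in> H \<and> (\<forall>a\<in>H. \<forall>b\<in>H. a + b \<in> H)"

definition qgroup :: "'a::ab_group_add set \<Rightarrow> 'a set" where
  "qgroup H = {a - b | a b. a \<in> H \<and> b \<in> H}"

definition valuation_monoid :: "'a::ab_group_add set \<Rightarrow> bool" where
  "valuation_monoid H \<longleftrightarrow> submonoid H \<and> (\<forall>x\<in>qgroup H. x \<in> H \<or> - x \<in> H)"

definition reduced_monoid :: "'a::ab_group_add set \<Rightarrow> bool" where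
  "reduced_monoid H \<longleftrightarrow> submonoid H \<and> (\<forall>x\<in>H. - x \<in> H \<longrightarrow> x = 0)"

definition monoid_iso :: "'a::ab_group_add set \<Rightarrow> 'b::ab_group_add set \<Rightarrow> bool" where
  "monoid_iso H1 H2 \<longleftrightarrow> (\<exists>f. bij_betw f H1 H2 \<and> (\<forall>a\<in>H1. \<forall>b\<in>H1. f (a + b) = f a + f b))"

definition setadd :: "'a::plus set \<Rightarrow> 'a set \<Rightarrow> 'a set" where
  "setadd X Y = {x + y | x y. x \<in> X \<and> y \<in> Y}"

definition Pfin1 :: "'a::zero set \<Rightarrow> 'a set set" where
  "Pfin1 H = {X. finite X \<and> 0 \<in> X \<and> X \<subseteq> H}"

definition Pfin1_iso :: "'a::ab_group_add set \<Rightarrow> 'b::ab_group_add set \<Rightarrow> bool" where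
  "Pfin1_iso H1 H2 \<longleftrightarrow> (\<exists>F. bij_betw F (Pfin1 H1) (Pfin1 H2) \<and>
      (\<forall>X\<in>Pfin1 H1. \<forall>Y\<in>Pfin1 H1. F (setadd X Y) = setadd (F X) (F Y)))"

definition H1 :: "(int \<times> int) set" where
  "H1 = {(x, y). y > 0} \<union> {(x, y). x \<ge> 0 \<and> y = 0}"

definition H2 :: "real \<Rightarrow> (int \<times> int) set" where
  "H2 \<alpha> = {(x, y). real_of_int y \<le> \<alpha> * real_of_int x}"

end

theory Submission
  imports Defs
begin

(* H1 and H2 are positive cones of translation-invariant total orders on int \<times> int.
   For such a cone K, every finite nonempty X has a K-least element m, and the
   normalisation X \<mapsto> X - m is additive under setwise addition. Normalising a set of
   P_fin,1(H) with respect to K and then back with respect to H returns it, so the two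
   normalisations are mutually inverse isomorphisms of the power monoids.
   The monoids themselves differ because H2 is archimedean (as \<alpha> is irrational), while
   in H1 the element (0,1) lies above every multiple of (1,0). *)

definition positive_cone :: "'a::ab_group_add set \<Rightarrow> bool" where
  "positive_cone K \<longleftrightarrow> reduced_monoid K \<and> (\<forall>x. x \<in> K \<or> - x \<in> K)"

definition is_cone_min :: "'a::ab_group_add set \<Rightarrow> 'a set \<Rightarrow> 'a \<Rightarrow> bool" where
  "is_cone_min K X m \<longleftrightarrow> m \<in> X \<and> (\<forall>x\<in>X. x - m \<in> K)"

definition cone_min :: "'a::ab_group_add set \<Rightarrow> 'a set \<Rightarrow> 'a" where
  "cone_min K X = (THE m. is_cone_min K X m)"

definition cone_normalize :: "'a::ab_group_add set \<Rightarrow> 'a set \<Rightarrow> 'a set" where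
  "cone_normalize K X = (\<lambda>x. x - cone_min K X) ` X"

lemma positive_cone_submonoid: "positive_cone K \<Longrightarrow> submonoid K"
  by (simp add: positive_cone_def reduced_monoid_def)

lemma positive_cone_add: "positive_cone K \<Longrightarrow> a \<in> K \<Longrightarrow> b \<in> K \<Longrightarrow> a + b \<in> K"
  using positive_cone_submonoid by (auto simp: submonoid_def)

lemma positive_cone_antisym: "positive_cone K \<Longrightarrow> x \<in> K \<Longrightarrow> - x \<in> K \<Longrightarrow> x = 0"
  by (simp add: positive_cone_def reduced_monoid_def)

lemma positive_cone_total: "positive_cone K \<Longrightarrow> x \<notin> K \<Longrightarrow> - x \<in> K"
  by (auto simp: positive_cone_def)

lemma positive_cone_imp_valuation_monoid: "positive_cone K \<Longrightarrow> valuation_monoid K"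
  by (simp add: valuation_monoid_def positive_cone_submonoid positive_cone_def)

lemma is_cone_min_exists:
  assumes K: "positive_cone K" and "finite X" "X \<noteq> {}"
  shows "\<exists>m. is_cone_min K X m"
  using assms(2,3)
proof (induction X rule: finite_ne_induct)
  case (singleton x)
  then show ?case
    using positive_cone_submonoid[OF K] by (auto simp: is_cone_min_def submonoid_def)
next
  case (insert a F)
  then obtain m where m: "is_cone_min K F m" by blast
  show ?case
  proof (cases "a - m \<in> K")
    case True
    with m show ?thesis by (auto simp: is_cone_min_def)
  next
    case False
    then have "m - a \<in> K" using positive_cone_total[OF K] by fastforce
    then have "x - a \<in> K" if "x \<in> F" for x
      using positive_cone_add[OF K] m that unfolding is_cone_min_def
      by (metis diff_add_cancel add_diff_eq)
    then have "is_cone_min K (insert a F) a"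
      using positive_cone_submonoid[OF K] by (auto simp: is_cone_min_def submonoid_def)
    then show ?thesis ..
  qed
qed

lemma is_cone_min_unique:
  assumes "positive_cone K" "is_cone_min K X m" "is_cone_min K X m'"
  shows "m = m'"
proof -
  have "m - m' \<in> K" "- (m - m') \<in> K"
    using assms(2,3) by (auto simp: is_cone_min_def)
  then show ?thesis using positive_cone_antisym[OF assms(1), of "m - m'"] by simp
qed

lemma cone_min_eqI: "positive_cone K \<Longrightarrow> is_cone_min K X m \<Longrightarrow> cone_min K X = m"
  unfolding cone_min_def using is_cone_min_unique by blast

lemma is_cone_min_cone_min:
  "positive_cone K \<Longrightarrow> finite X \<Longrightarrow> X \<noteq> {} \<Longrightarrow> is_cone_min K X (cone_min K X)"
  using is_cone_min_exists cone_min_eqI by metis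

lemma is_cone_min_translate:
  "is_cone_min K X m \<Longrightarrow> is_cone_min K ((\<lambda>x. x - c) ` X) (m - c)"
  by (auto simp: is_cone_min_def)

lemma is_cone_min_setadd:
  assumes "positive_cone K" "is_cone_min K X a" "is_cone_min K Y b"
  shows "is_cone_min K (setadd X Y) (a + b)"
proof -
  have regroup: "x + y - (a + b) = (x - a) + (y - b)" for x y
    by (simp add: algebra_simps)
  show ?thesis
    using assms positive_cone_add[OF assms(1)]
    unfolding is_cone_min_def setadd_def by (auto simp: regroup)
qed

lemma is_cone_min_Pfin1: "X \<in> Pfin1 K \<Longrightarrow> is_cone_min K X 0"
  by (auto simp: Pfin1_def is_cone_min_def)

lemma Pfin1_finite_nonempty: "X \<in> Pfin1 K \<Longrightarrow> finite X \<and> X \<noteq> {}"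
  by (auto simp: Pfin1_def)

lemma cone_normalize_translate:
  assumes "positive_cone K" "finite X" "X \<noteq> {}"
  shows "cone_normalize K ((\<lambda>x. x - c) ` X) = cone_normalize K X"
proof -
  have "cone_min K ((\<lambda>x. x - c) ` X) = cone_min K X - c"
    using assms is_cone_min_cone_min is_cone_min_translate cone_min_eqI by metis
  then show ?thesis by (simp add: cone_normalize_def image_image)
qed

lemma cone_normalize_Pfin1:
  assumes "positive_cone K" "X \<in> Pfin1 K"
  shows "cone_normalize K X = X"
proof -
  have "cone_min K X = 0"
    using cone_min_eqI[OF assms(1) is_cone_min_Pfin1[OF assms(2)]] .
  then show ?thesis by (simp add: cone_normalize_def)
qed

lemma cone_normalize_in_Pfin1:
  assumes "positive_cone K" "finite X" "X \<noteq> {}"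
  shows "cone_normalize K X \<in> Pfin1 K"
  using is_cone_min_cone_min[OF assms] assms(2)
  by (force simp: cone_normalize_def Pfin1_def is_cone_min_def)

lemma image_diff_setadd:
  fixes a b :: "'a::ab_group_add"
  shows "(\<lambda>z. z - (a + b)) ` setadd X Y = setadd ((\<lambda>x. x - a) ` X) ((\<lambda>y. y - b) ` Y)"
proof -
  have regroup: "x + y - (a + b) = (x - a) + (y - b)" for x y
    by (simp add: algebra_simps)
  have "(\<lambda>z. z - (a + b)) ` setadd X Y = (\<lambda>(x, y). x + y - (a + b)) ` (X \<times> Y)"
    unfolding setadd_def by auto
  also have "\<dots> = (\<lambda>(x, y). x + y) ` ((\<lambda>(x, y). (x - a, y - b)) ` (X \<times> Y))"
    by (simp add: image_image regroup case_prod_unfold)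
  also have "\<dots> = (\<lambda>(x, y). x + y) ` ((\<lambda>x. x - a) ` X \<times> (\<lambda>y. y - b) ` Y)"
    by (simp only: image_paired_Times)
  also have "\<dots> = setadd ((\<lambda>x. x - a) ` X) ((\<lambda>y. y - b) ` Y)"
    unfolding setadd_def by auto
  finally show ?thesis .
qed

lemma cone_normalize_setadd:
  assumes K: "positive_cone K" and X: "finite X" "X \<noteq> {}" and Y: "finite Y" "Y \<noteq> {}"
  shows "cone_normalize K (setadd X Y) = setadd (cone_normalize K X) (cone_normalize K Y)"
proof -
  have "cone_min K (setadd X Y) = cone_min K X + cone_min K Y"
    using cone_min_eqI[OF K] is_cone_min_setadd[OF K] is_cone_min_cone_min[OF K] X Y by metis
  then show ?thesis by (simp add: cone_normalize_def image_diff_setadd)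
qed

theorem Pfin1_iso_positive_cones:
  fixes H K :: "'a::ab_group_add set"
  assumes H: "positive_cone H" and K: "positive_cone K"
  shows "Pfin1_iso H K"
  unfolding Pfin1_iso_def
proof (intro exI conjI ballI)
  have inverse: "cone_normalize L (cone_normalize L' X) = X"
    if L: "positive_cone L" and "X \<in> Pfin1 L" for L L' :: "'a set" and X
  proof -
    have "cone_normalize L (cone_normalize L' X) = cone_normalize L X"
      unfolding cone_normalize_def[of L' X]
      using cone_normalize_translate[OF L] Pfin1_finite_nonempty[OF \<open>X \<in> Pfin1 L\<close>] by blast
    also have "\<dots> = X"
      using cone_normalize_Pfin1[OF L \<open>X \<in> Pfin1 L\<close>] .
    finally show ?thesis .
  qed
  have maps_into: "cone_normalize L ` Pfin1 L' \<subseteq> Pfin1 L"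
    if "positive_cone L" for L L' :: "'a set"
    using cone_normalize_in_Pfin1[OF that] Pfin1_finite_nonempty by blast
  show "bij_betw (cone_normalize K) (Pfin1 H) (Pfin1 K)"
  proof (rule bij_betw_byWitness[where f' = "cone_normalize H"])
    show "\<forall>X\<in>Pfin1 H. cone_normalize H (cone_normalize K X) = X"
      using inverse[OF H] by blast
    show "\<forall>X\<in>Pfin1 K. cone_normalize K (cone_normalize H X) = X"
      using inverse[OF K] by blast
  qed (use maps_into H K in blast)+
  show "cone_normalize K (setadd X Y) = setadd (cone_normalize K X) (cone_normalize K Y)"
    if "X \<in> Pfin1 H" "Y \<in> Pfin1 H" for X Y
    using cone_normalize_setadd[OF K] Pfin1_finite_nonempty that by blast
qed

(* ((+) a ^^ n) c = n a + c, so b fails to be above n a for some n. *)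
definition archimedean_monoid :: "'a::ab_group_add set \<Rightarrow> bool" where
  "archimedean_monoid H \<longleftrightarrow>
     (\<forall>a\<in>H. \<forall>b\<in>H. a \<noteq> 0 \<longrightarrow> (\<exists>n. \<forall>c\<in>H. ((+) a ^^ n) c \<noteq> b))"

lemma additive_funpow_add:
  assumes "submonoid H" and f: "\<forall>x\<in>H. \<forall>y\<in>H. f (x + y) = f x + f y"
    and "a \<in> H" "c \<in> H"
  shows "((+) a ^^ n) c \<in> H \<and> f (((+) a ^^ n) c) = ((+) (f a) ^^ n) (f c)"
  using assms by (induction n) (auto simp: submonoid_def)

lemma monoid_iso_archimedean:
  assumes iso: "monoid_iso H K" and H: "submonoid H" and K: "archimedean_monoid K"
  shows "archimedean_monoid H"
  unfolding archimedean_monoid_def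
proof (intro ballI impI)
  fix a b assume a: "a \<in> H" and b: "b \<in> H" and "a \<noteq> 0"
  obtain f where bij: "bij_betw f H K" and f: "\<forall>x\<in>H. \<forall>y\<in>H. f (x + y) = f x + f y"
    using iso unfolding monoid_iso_def by blast
  have "0 \<in> H" using H by (simp add: submonoid_def)
  then have "f 0 = 0" using f by (metis add.right_neutral add_left_imp_eq)
  then have "f a \<noteq> 0"
    using inj_onD[OF bij_betw_imp_inj_on[OF bij] _ a \<open>0 \<in> H\<close>] \<open>a \<noteq> 0\<close> by auto
  moreover have "f a \<in> K" "f b \<in> K" using a b bij bij_betwE by blast+
  ultimately obtain n where n: "\<forall>c'\<in>K. ((+) (f a) ^^ n) c' \<noteq> f b"
    using K unfolding archimedean_monoid_def by blast
  have "((+) a ^^ n) c \<noteq> b" if "c \<in> H" for c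
  proof
    assume "((+) a ^^ n) c = b"
    then have "((+) (f a) ^^ n) (f c) = f b"
      using additive_funpow_add[OF H f a that, of n] by simp
    moreover have "f c \<in> K" using bij_betwE[OF bij] that by blast
    ultimately show False using n by blast
  qed
  then show "\<exists>n. \<forall>c\<in>H. ((+) a ^^ n) c \<noteq> b" by blast
qed

lemma funpow_add_int_pair:
  "((+) (p, q) ^^ n) (x, y) = (x + int n * p, y + int n * q)" for p q x y :: int
  by (induction n) (simp_all add: algebra_simps)

lemma positive_cone_H1: "positive_cone H1"
  by (auto simp: positive_cone_def reduced_monoid_def submonoid_def H1_def zero_prod_def)

lemma H1_not_archimedean: "\<not> archimedean_monoid H1"
proof -
  have "((+) (1, 0) ^^ n) (- int n, 1) = ((0, 1) :: int \<times> int)" for n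
    by (simp add: funpow_add_int_pair)
  moreover have "(- int n, 1) \<in> H1" for n
    by (simp add: H1_def)
  moreover have "((1, 0) :: int \<times> int) \<in> H1" "((0, 1) :: int \<times> int) \<in> H1"
    by (simp_all add: H1_def)
  moreover have "((1, 0) :: int \<times> int) \<noteq> 0" by (simp add: zero_prod_def)
  ultimately show ?thesis
    unfolding archimedean_monoid_def by blast
qed

lemma int_point_on_irrational_line:
  assumes "\<alpha> \<notin> \<rat>" "real_of_int y = \<alpha> * real_of_int x"
  shows "x = 0 \<and> y = 0"
proof (cases "x = 0")
  case False
  then have "\<alpha> = real_of_int y / real_of_int x" using assms(2) by (simp add: field_simps)
  then show ?thesis using assms(1) by (metis Rats_divide Rats_of_int)
qed (use assms in simp)

lemma positive_cone_H2:
  assumes "\<alpha> \<notin> \<rat>"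
  shows "positive_cone (H2 \<alpha>)"
proof -
  have "submonoid (H2 \<alpha>)"
    by (auto simp: submonoid_def H2_def zero_prod_def distrib_left)
  moreover have "p = 0" if "p \<in> H2 \<alpha>" "- p \<in> H2 \<alpha>" for p
    using that int_point_on_irrational_line[OF assms, of "snd p" "fst p"]
    by (cases p) (simp add: H2_def zero_prod_def)
  ultimately show ?thesis
    by (auto simp: positive_cone_def reduced_monoid_def H2_def)
qed

lemma H2_archimedean:
  assumes "\<alpha> \<notin> \<rat>"
  shows "archimedean_monoid (H2 \<alpha>)"
  unfolding archimedean_monoid_def
proof (intro ballI impI)
  fix a b assume "a \<in> H2 \<alpha>" "b \<in> H2 \<alpha>" "a \<noteq> 0"
  obtain p q r s where ab: "a = (p, q)" "b = (r, s)" by fastforce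
  have "real_of_int q \<noteq> \<alpha> * real_of_int p"
    using int_point_on_irrational_line[OF assms] \<open>a \<noteq> 0\<close> ab by (auto simp: zero_prod_def)
  then have gap: "\<alpha> * real_of_int p - real_of_int q > 0"
    using \<open>a \<in> H2 \<alpha>\<close> ab by (simp add: H2_def)
  obtain n :: nat
    where n: "\<alpha> * real_of_int r - real_of_int s < real n * (\<alpha> * real_of_int p - real_of_int q)"
    using reals_Archimedean3[OF gap] by blast
  have "((+) a ^^ n) c \<noteq> b" if "c \<in> H2 \<alpha>" for c
  proof
    assume "((+) a ^^ n) c = b"
    moreover obtain x y where c: "c = (x, y)" by fastforce
    ultimately have "r = x + int n * p" "s = y + int n * q"
      using ab by (simp_all add: funpow_add_int_pair)
    moreover have "real_of_int y \<le> \<alpha> * real_of_int x" using that c by (simp add: H2_def)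
    ultimately show False using n by (simp add: algebra_simps)
  qed
  then show "\<exists>n. \<forall>c\<in>H2 \<alpha>. ((+) a ^^ n) c \<noteq> b" by blast
qed

theorem corollary3:
  fixes \<alpha> :: real
  assumes "\<alpha> > 0" and "\<alpha> \<notin> \<rat>"
  shows "valuation_monoid H1 \<and> reduced_monoid H1 \<and>
         valuation_monoid (H2 \<alpha>) \<and> reduced_monoid (H2 \<alpha>) \<and>
         \<not> monoid_iso H1 (H2 \<alpha>) \<and> Pfin1_iso H1 (H2 \<alpha>)"
proof -
  have H1: "positive_cone H1" and H2: "positive_cone (H2 \<alpha>)"
    using positive_cone_H1 positive_cone_H2[OF assms(2)] .
  have "\<not> monoid_iso H1 (H2 \<alpha>)"
    using monoid_iso_archimedean positive_cone_submonoid[OF H1] H1_not_archimedean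
      H2_archimedean[OF assms(2)] by blast
  moreover have "reduced_monoid H1" "reduced_monoid (H2 \<alpha>)"
    using H1 H2 by (simp_all add: positive_cone_def)
  ultimately show ?thesis
    using H1 H2 positive_cone_imp_valuation_monoid Pfin1_iso_positive_cones[OF H1 H2] by blast
qed

end
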